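(* Let $M$ be an Orlicz function satisfying the $\Delta_2^\infty$-condition, and let $\phi_U(n):=\|\sum_{k=1}^ne_k\|_{(L_M)_U}$, $n\in\mathbb N$, where $e_k$ are the canonical unit vectors. Then $\phi_U(n)\asymp\Phi_{M^{-1}}(n)$, $n\in\mathbb N$, with constants independent of $n$, where $M^{-1}$ is the inverse function of $M$.
   Context: An Orlicz function is an increasing convex continuous $M:[0,\infty)\to[0,\infty)$ with $M(0)=0$, $M(t)\to\infty$, normalized by $M(1)=1$ (assumed strictly increasing so $M^{-1}$ exists); $M\in\Delta_2^\infty$ means $\sup_{u\ge1}M(2u)/M(u)<\infty$. $L_M=L_M[0,1]$ (Lebesgue measure) has the Luxemburg norm $\|f\|_{L_M}:=\inf\{\lambda>0:\int_0^1M(|f|/\lambda)\le1\}$. For a Banach lattice $X$, $\mathfrak B_n(X)$ is the set of $n$-tuples of pairwise disjoint norm-one elements; $\|a\|_{X_U(n)}:=\sup\{\|\sum_{i=1}^na_ix_i\|_X:(x_i)\in\mathfrak B_n(X)\}$, and $X_U$ is the space of real sequences with $\|a\|_{X_U}:=\sup_n\|(a_i)_{i=1}^n\|_{X_U(n)}<\infty$. For $g:(0,\infty)\to(0,\infty)$, $\Phi_g(u):=\sup_{v\ge\max(1,1/u)}g(vu)/g(v)$, $u>0$. $F\asymp G$ means $c^{-1}G\le F\le cG$ for a constant $c$. *)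

theory Defs
  imports "HOL-Analysis.Analysis"
begin

definition orlicz_function :: "(real \<Rightarrow> real) \<Rightarrow> bool" where
  "orlicz_function M \<longleftrightarrow>
     strict_mono_on {0..} M \<and> convex_on {0..} M \<and> continuous_on {0..} M \<and>
     M 0 = 0 \<and> filterlim M at_top at_top \<and> M 1 = 1"

definition delta2_infty :: "(real \<Rightarrow> real) \<Rightarrow> bool" where
  "delta2_infty M \<longleftrightarrow> (\<exists>C. \<forall>u\<ge>1. M (2 * u) \<le> C * M u)"

definition orlicz_modular :: "(real \<Rightarrow> real) \<Rightarrow> (real \<Rightarrow> real) \<Rightarrow> ennreal" where
  "orlicz_modular M f = (\<integral>\<^sup>+ t. ennreal (M \<bar>f t\<bar>) \<partial>(lebesgue_on {0..1}))"

definition in_LM :: "(real \<Rightarrow> real) \<Rightarrow> (real \<Rightarrow> real) \<Rightarrow> bool" where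
  "in_LM M f \<longleftrightarrow> f \<in> borel_measurable (lebesgue_on {0..1}) \<and>
     (\<exists>r>0. orlicz_modular M (\<lambda>t. f t / r) \<le> 1)"

definition lux_norm :: "(real \<Rightarrow> real) \<Rightarrow> (real \<Rightarrow> real) \<Rightarrow> real" where
  "lux_norm M f = Inf {r. r > 0 \<and> orlicz_modular M (\<lambda>t. f t / r) \<le> 1}"

definition disj_normone :: "(real \<Rightarrow> real) \<Rightarrow> nat \<Rightarrow> (nat \<Rightarrow> real \<Rightarrow> real) \<Rightarrow> bool" where
  "disj_normone M n x \<longleftrightarrow>
     (\<forall>i\<in>{1..n}. in_LM M (x i) \<and> lux_norm M (x i) = 1) \<and>
     (\<forall>i\<in>{1..n}. \<forall>j\<in>{1..n}. i \<noteq> j \<longrightarrow>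
        (AE t in lebesgue_on {0..1}. x i t = 0 \<or> x j t = 0))"

definition XU_n :: "(real \<Rightarrow> real) \<Rightarrow> nat \<Rightarrow> (nat \<Rightarrow> real) \<Rightarrow> ereal" where
  "XU_n M n a = Sup {ereal (lux_norm M (\<lambda>t. \<Sum>i\<in>{1..n}. a i * x i t)) | x. disj_normone M n x}"

definition XU :: "(real \<Rightarrow> real) \<Rightarrow> (nat \<Rightarrow> real) \<Rightarrow> ereal" where
  "XU M a = (SUP n. XU_n M n a)"

definition phiU :: "(real \<Rightarrow> real) \<Rightarrow> nat \<Rightarrow> ereal" where
  "phiU M n = XU M (\<lambda>k. if 1 \<le> k \<and> k \<le> n then 1 else 0)"

definition Phi_fun :: "(real \<Rightarrow> real) \<Rightarrow> real \<Rightarrow> ereal" where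
  "Phi_fun g u = Sup {ereal (g (v * u) / g v) | v. v \<ge> max 1 (1 / u)}"

definition orlicz_inv :: "(real \<Rightarrow> real) \<Rightarrow> real \<Rightarrow> real" where
  "orlicz_inv M = inv_into {0..} M"

end

theory Submission
  imports Defs
begin

text \<open>
Let $g = M^{-1}$, which is concave with $g(1) = 1$, so $P = \Phi_g(n)$ lies in $[1, n]$.

Lower bound: for $v \ge 1$ cut $[0, 1/v)$ into $n$ intervals of length $1/(vn)$. The functions
equal to $g(vn)$ on one of them are disjoint of Luxemburg norm one, and their sum has norm
$g(vn)/g(v)$; taking the supremum over $v$ gives $\Phi_g(n) \le \phi_U(n)$.

Upper bound: the definition of $P$ with $v = M(t)$ says $n\,M(t) \le M(Pt)$ for $t \ge 1$, hence
$M(s/P) \le M(s)/n + 1$ for $s \ge 0$. At a point where at most one of $k \le n$ disjoint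
norm-one functions $x_i$ is nonzero, convexity then gives
$M(|\sum x_i|/4P) \le \sum M(|x_i|/2)/2n + 1/2$, and since $\int M(|x_i|/2) \le 1$ the modular
of $\sum x_i/4P$ is at most $1$. So $\phi_U(n) \le 4\,\Phi_g(n)$.
\<close>

lemma lux_norm_le:
  assumes "0 < r" "orlicz_modular M (\<lambda>t. f t / r) \<le> 1"
  shows "lux_norm M f \<le> r"
  unfolding lux_norm_def by (rule cInf_lower) (use assms in \<open>auto intro: bdd_belowI[of _ 0]\<close>)

lemma le_lux_norm:
  assumes "0 < r" "orlicz_modular M (\<lambda>t. f t / r) \<le> 1"
    and "\<And>r. 0 < r \<Longrightarrow> orlicz_modular M (\<lambda>t. f t / r) \<le> 1 \<Longrightarrow> c \<le> r"
  shows "c \<le> lux_norm M f"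
  unfolding lux_norm_def by (rule cInf_greatest) (use assms in auto)

lemma
  assumes "S \<in> sets lebesgue" "a \<le> b" "{a..<b} \<subseteq> S"
  shows sets_lebesgue_on_Ico: "{a..<b} \<in> sets (lebesgue_on S)"
    and emeasure_lebesgue_on_Ico: "emeasure (lebesgue_on S) {a..<b} = ennreal (b - a)"
proof -
  show "{a..<b} \<in> sets (lebesgue_on S)"
    using assms by (simp add: sets_restrict_space_iff)
  have "emeasure (lebesgue_on S) {a..<b} = emeasure lebesgue {a..<b}"
    using assms by (intro emeasure_restrict_space) auto
  then show "emeasure (lebesgue_on S) {a..<b} = ennreal (b - a)"
    using assms by simp
qed

lemma emeasure_space_lebesgue_on_unit:
  "emeasure (lebesgue_on {0..1::real}) (space (lebesgue_on {0..1})) = 1"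
  by (simp add: emeasure_restrict_space)

lemma Phi_fun_nat:
  assumes "1 \<le> n"
  shows "Phi_fun g (real n) = (SUP v\<in>{1..}. ereal (g (v * real n) / g v))"
proof -
  have "max 1 (1 / real n) = 1" using assms by auto
  then show ?thesis unfolding Phi_fun_def by (simp add: image_def) (metis atLeast_iff)
qed

lemma sum_indicator_consecutive_Ico:
  fixes h :: real
  assumes "0 < h"
  shows "(\<Sum>i\<in>{1..n}. indicator {(real i - 1) * h..<real i * h} t) = (indicator {0..<real n * h} t :: real)"
proof (induction n)
  case (Suc n)
  have "0 \<le> real n * h" "real n * h \<le> real (Suc n) * h"
    using assms by (simp_all add: mult_right_mono)
  then have "{0..<real (Suc n) * h} = {0..<real n * h} \<union> {real n * h..<real (Suc n) * h}"
    by (rule ivl_disj_un_two(3)[symmetric])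
  then have "indicator {0..<real (Suc n) * h} t
      = (indicator {0..<real n * h} t + indicator {real n * h..<real (Suc n) * h} t :: real)"
    by (simp only: indicator_disj_union[OF ivl_disj_int_two(3)])
  with Suc show ?case by simp
qed simp

lemma sum_disjoint_support:
  fixes x :: "'a \<Rightarrow> real"
  assumes "finite J" "\<forall>i\<in>J. \<forall>j\<in>J. i \<noteq> j \<longrightarrow> x i = 0 \<or> x j = 0"
  obtains "(\<Sum>i\<in>J. x i) = 0" | j where "j \<in> J" "(\<Sum>i\<in>J. x i) = x j"
proof (cases "\<exists>j\<in>J. x j \<noteq> 0")
  case True
  then obtain j where j: "j \<in> J" "x j \<noteq> 0" by auto
  have "(\<Sum>i\<in>J. x i) = x j + (\<Sum>i\<in>J - {j}. x i)"
    using sum.remove[OF assms(1) j(1)] .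
  also have "(\<Sum>i\<in>J - {j}. x i) = 0"
    using assms(2) j by (intro sum.neutral) blast
  finally show ?thesis using j that by simp
qed (use that in simp)

lemma lux_norm_sum_le_phiU:
  assumes "disj_normone M n x"
  shows "ereal (lux_norm M (\<lambda>t. \<Sum>i\<in>{1..n}. x i t)) \<le> phiU M n"
proof -
  let ?a = "\<lambda>k::nat. if 1 \<le> k \<and> k \<le> n then 1 else 0 :: real"
  have "(\<lambda>t. \<Sum>i\<in>{1..n}. x i t) = (\<lambda>t. \<Sum>i\<in>{1..n}. ?a i * x i t)"
    by (intro ext sum.cong) auto
  then have "ereal (lux_norm M (\<lambda>t. \<Sum>i\<in>{1..n}. x i t)) \<le> XU_n M n ?a"
    unfolding XU_n_def using assms by (intro Sup_upper) auto
  also have "\<dots> \<le> XU M ?a"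
    unfolding XU_def by (rule SUP_upper) simp
  finally show ?thesis unfolding phiU_def .
qed

locale orlicz =
  fixes M :: "real \<Rightarrow> real"
  assumes orlicz_function: "orlicz_function M"
begin

lemma M_zero [simp]: "M 0 = 0" and M_one [simp]: "M 1 = 1"
  using orlicz_function unfolding orlicz_function_def by auto

lemma M_less: "0 \<le> x \<Longrightarrow> x < y \<Longrightarrow> M x < M y"
  using orlicz_function unfolding orlicz_function_def strict_mono_on_def by auto

lemma M_le_iff: "0 \<le> x \<Longrightarrow> 0 \<le> y \<Longrightarrow> M x \<le> M y \<longleftrightarrow> x \<le> y"
  using M_less by (metis linorder_not_le order_le_less)

lemma M_mono: "0 \<le> x \<Longrightarrow> x \<le> y \<Longrightarrow> M x \<le> M y"
  using M_le_iff by simp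

lemma M_nonneg: "0 \<le> x \<Longrightarrow> 0 \<le> M x"
  using M_mono[of 0 x] by simp

lemma M_surj_nonneg:
  assumes "0 \<le> y"
  shows "y \<in> M ` {0..}"
proof -
  have "filterlim M at_top at_top"
    using orlicz_function unfolding orlicz_function_def by auto
  then obtain b where b: "\<And>x. x \<ge> b \<Longrightarrow> M x \<ge> y"
    by (auto simp: filterlim_at_top eventually_at_top_linorder)
  have "continuous_on {0..max b 0} M"
    using orlicz_function unfolding orlicz_function_def by (auto intro: continuous_on_subset)
  with IVT'[of M 0 y "max b 0"] b assms obtain x where "0 \<le> x" "M x = y"
    by auto
  then show ?thesis by auto
qed

lemma orlicz_inv_nonneg: "0 \<le> y \<Longrightarrow> 0 \<le> orlicz_inv M y"
  and M_orlicz_inv [simp]: "0 \<le> y \<Longrightarrow> M (orlicz_inv M y) = y"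
  using inv_into_into[OF M_surj_nonneg, of y] f_inv_into_f[OF M_surj_nonneg, of y]
  unfolding orlicz_inv_def by auto

lemma orlicz_inv_M [simp]: "0 \<le> x \<Longrightarrow> orlicz_inv M (M x) = x"
  using orlicz_function unfolding orlicz_function_def orlicz_inv_def
  by (auto intro: inv_into_f_f strict_mono_on_imp_inj_on)

lemma orlicz_inv_le_iff: "0 \<le> y \<Longrightarrow> 0 \<le> x \<Longrightarrow> orlicz_inv M y \<le> x \<longleftrightarrow> y \<le> M x"
  using M_le_iff[of "orlicz_inv M y" x] orlicz_inv_nonneg by simp

lemma le_orlicz_inv_iff: "0 \<le> y \<Longrightarrow> 0 \<le> x \<Longrightarrow> x \<le> orlicz_inv M y \<longleftrightarrow> M x \<le> y"
  using M_le_iff[of x "orlicz_inv M y"] orlicz_inv_nonneg by simp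

lemma orlicz_inv_one [simp]: "orlicz_inv M 1 = 1"
  using orlicz_inv_M[of 1] by simp

lemma one_le_orlicz_inv: "1 \<le> y \<Longrightarrow> 1 \<le> orlicz_inv M y"
  using le_orlicz_inv_iff[of y 1] by simp

lemma orlicz_inv_pos: "0 < y \<Longrightarrow> 0 < orlicz_inv M y"
  using orlicz_inv_nonneg[of y] M_orlicz_inv[of y] by (cases "orlicz_inv M y = 0") auto

lemma mult_M_le_M_mult:
  assumes "0 \<le> w" "1 \<le> k"
  shows "k * M w \<le> M (k * w)"
proof -
  have "convex_on {0..} M"
    using orlicz_function unfolding orlicz_function_def by auto
  then have "M ((1 - 1/k) *\<^sub>R 0 + (1/k) *\<^sub>R (k * w)) \<le> (1 - 1/k) * M 0 + (1/k) * M (k * w)"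
    by (rule convex_onD) (use assms in auto)
  with assms show ?thesis by (simp add: field_simps)
qed

lemma orlicz_inv_mult_le:
  assumes "0 \<le> v" "1 \<le> k"
  shows "orlicz_inv M (k * v) \<le> k * orlicz_inv M v"
  using mult_M_le_M_mult[of "orlicz_inv M v" k] assms orlicz_inv_nonneg[of v]
  by (simp add: orlicz_inv_le_iff)

lemma Phi_fun_inv_nat:
  assumes n: "1 \<le> n"
  obtains P where "Phi_fun (orlicz_inv M) (real n) = ereal P" "1 \<le> P" "P \<le> real n"
proof -
  let ?r = "\<lambda>v. ereal (orlicz_inv M (v * real n) / orlicz_inv M v)"
  have "?r v \<le> ereal (real n)" if "v \<in> {1..}" for v
    using orlicz_inv_mult_le[of v "real n"] one_le_orlicz_inv[of v] that n
    by (simp add: divide_le_eq mult.commute)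
  then have le: "Phi_fun (orlicz_inv M) (real n) \<le> ereal (real n)"
    unfolding Phi_fun_nat[OF n] by (rule SUP_least)
  have "ereal 1 \<le> ?r 1"
    using one_le_orlicz_inv[of "real n"] n by simp
  also have "?r 1 \<le> Phi_fun (orlicz_inv M) (real n)"
    unfolding Phi_fun_nat[OF n] by (rule SUP_upper) simp
  finally have ge: "ereal 1 \<le> Phi_fun (orlicz_inv M) (real n)" .
  from le ge show ?thesis
    by (cases "Phi_fun (orlicz_inv M) (real n)") (auto intro: that)
qed

lemma dilation_Phi_fun_inv:
  assumes n: "1 \<le> n" and P: "Phi_fun (orlicz_inv M) (real n) = ereal P" and t: "1 \<le> t"
  shows "real n * M t \<le> M (P * t)"
proof -
  have Mt: "1 \<le> M t" using M_mono[of 1 t] t by simp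
  have "ereal (orlicz_inv M (M t * real n) / orlicz_inv M (M t)) \<le> Phi_fun (orlicz_inv M) (real n)"
    unfolding Phi_fun_nat[OF n] by (rule SUP_upper) (use Mt in simp)
  then have le: "orlicz_inv M (M t * real n) \<le> P * t"
    using P t by (simp add: divide_le_eq)
  moreover have "0 \<le> orlicz_inv M (M t * real n)"
    using Mt by (simp add: orlicz_inv_nonneg)
  ultimately show ?thesis
    using Mt orlicz_inv_le_iff[of "M t * real n" "P * t"] by (simp add: mult.commute)
qed

lemma orlicz_modular_mono:
  assumes "\<And>t. \<bar>f t\<bar> \<le> \<bar>h t\<bar>"
  shows "orlicz_modular M f \<le> orlicz_modular M h"
  unfolding orlicz_modular_def
  by (rule nn_integral_mono) (use assms M_mono in \<open>auto intro: ennreal_leI\<close>)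

lemma orlicz_modular_half_le_one:
  assumes "in_LM M f" "lux_norm M f = 1"
  shows "orlicz_modular M (\<lambda>t. f t / 2) \<le> 1"
proof -
  let ?S = "{r. 0 < r \<and> orlicz_modular M (\<lambda>t. f t / r) \<le> 1}"
  have "?S \<noteq> {}" using assms(1) unfolding in_LM_def by auto
  moreover have "Inf ?S < 2" using assms(2) unfolding lux_norm_def by simp
  ultimately obtain r where r: "r \<in> ?S" "r < 2"
    using cInf_less_iff[of ?S 2] bdd_belowI[of ?S 0] by auto
  have "orlicz_modular M (\<lambda>t. f t / 2) \<le> orlicz_modular M (\<lambda>t. f t / r)"
  proof (rule orlicz_modular_mono)
    fix t
    have "\<bar>f t\<bar> / 2 \<le> \<bar>f t\<bar> / r" by (rule divide_left_mono) (use r in auto)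
    then show "\<bar>f t / 2\<bar> \<le> \<bar>f t / r\<bar>" using r by (simp add: abs_divide)
  qed
  with r show ?thesis by auto
qed

lemma M_abs_measurable:
  assumes "f \<in> borel_measurable N"
  shows "(\<lambda>t. M \<bar>f t\<bar>) \<in> borel_measurable N"
proof -
  have "continuous_on {0..} M"
    using orlicz_function unfolding orlicz_function_def by auto
  then have "continuous_on UNIV (\<lambda>y. M \<bar>y\<bar>)"
    by (rule continuous_on_compose2) (auto intro: continuous_intros)
  then show ?thesis
    using measurable_compose[OF assms borel_measurable_continuous_onI] by blast
qed

lemma orlicz_modular_step:
  assumes "0 \<le> c" "0 \<le> a" "a \<le> b" "b \<le> 1" "0 < r"
  shows "orlicz_modular M (\<lambda>t. c * indicator {a..<b} t / r) = ennreal (M (c / r) * (b - a))"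
proof -
  have "orlicz_modular M (\<lambda>t. c * indicator {a..<b} t / r)
      = (\<integral>\<^sup>+ t. ennreal (M (c / r)) * indicator {a..<b} t \<partial>lebesgue_on {0..1})"
    unfolding orlicz_modular_def
    by (rule nn_integral_cong) (use assms in \<open>auto simp: indicator_def\<close>)
  also have "\<dots> = ennreal (M (c / r)) * ennreal (b - a)"
    using assms nn_integral_cmult_indicator[OF sets_lebesgue_on_Ico[of "{0..1}" a b]]
      emeasure_lebesgue_on_Ico[of "{0..1}" a b] by (simp add: subset_eq)
  also have "\<dots> = ennreal (M (c / r) * (b - a))"
    using assms M_nonneg[of "c / r"] by (simp add: ennreal_mult)
  finally show ?thesis .
qed

lemma
  assumes "0 < c" "0 \<le> a" "a < b" "b \<le> 1"
  shows in_LM_step: "in_LM M (\<lambda>t. c * indicator {a..<b} t)"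
    and lux_norm_step: "lux_norm M (\<lambda>t. c * indicator {a..<b} t) = c / orlicz_inv M (1 / (b - a))"
proof -
  let ?f = "\<lambda>t. c * indicator {a..<b} t"
  let ?L = "c / orlicz_inv M (1 / (b - a))"
  have L: "0 < ?L" using assms orlicz_inv_pos[of "1 / (b - a)"] by simp
  have admissible: "orlicz_modular M (\<lambda>t. ?f t / r) \<le> 1 \<longleftrightarrow> ?L \<le> r" if "0 < r" for r
  proof -
    have "orlicz_modular M (\<lambda>t. ?f t / r) \<le> 1 \<longleftrightarrow> M (c / r) \<le> 1 / (b - a)"
      using assms that by (simp add: orlicz_modular_step field_simps)
    also have "\<dots> \<longleftrightarrow> c / r \<le> orlicz_inv M (1 / (b - a))"
      using assms that by (simp add: le_orlicz_inv_iff)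
    also have "\<dots> \<longleftrightarrow> ?L \<le> r"
      using assms that orlicz_inv_pos[of "1 / (b - a)"] by (simp add: field_simps)
    finally show ?thesis .
  qed
  have "?f \<in> borel_measurable (lebesgue_on {0..1})"
    using assms by (intro borel_measurable_times measurable_const borel_measurable_indicator
      sets_lebesgue_on_Ico) auto
  then show "in_LM M ?f"
    unfolding in_LM_def using L admissible by blast
  show "lux_norm M ?f = ?L"
  proof -
    have adm: "orlicz_modular M (\<lambda>t. ?f t / ?L) \<le> 1" using admissible[OF L] by simp
    show ?thesis
      using admissible by (intro antisym lux_norm_le[OF L adm] le_lux_norm[OF L adm]) blast
  qed
qed

lemma disj_normone_steps:
  assumes h: "0 < h" "real n * h \<le> 1"
  shows "disj_normone M n (\<lambda>i t. orlicz_inv M (1 / h) * indicator {(real i - 1) * h..<real i * h} t)"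
  unfolding disj_normone_def
proof (intro conjI ballI impI)
  fix i assume i: "i \<in> {1..n}"
  have K: "0 < orlicz_inv M (1 / h)" using h orlicz_inv_pos by simp
  have "real i * h \<le> real n * h" using i h by (simp add: mult_right_mono)
  then have Ico: "0 \<le> (real i - 1) * h" "(real i - 1) * h < real i * h" "real i * h \<le> 1"
    using i h by (simp_all, linarith)
  show "in_LM M (\<lambda>t. orlicz_inv M (1 / h) * indicator {(real i - 1) * h..<real i * h} t)"
    using in_LM_step[OF K Ico] .
  show "lux_norm M (\<lambda>t. orlicz_inv M (1 / h) * indicator {(real i - 1) * h..<real i * h} t) = 1"
    using lux_norm_step[OF K Ico] K by (simp add: algebra_simps)
next
  fix i j :: nat assume "i \<noteq> j"
  then have "{(real i - 1) * h..<real i * h} \<inter> {(real j - 1) * h..<real j * h} = {}"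
    using h(1) by (cases "i < j") (auto simp: not_less dest!: less_imp_Suc_add le_Suc_ex
        intro: mult_right_mono order_trans[rotated])
  then show "AE t in lebesgue_on {0..1}.
      orlicz_inv M (1 / h) * indicator {(real i - 1) * h..<real i * h} t = 0 \<or>
      orlicz_inv M (1 / h) * indicator {(real j - 1) * h..<real j * h} t = 0"
    by (auto simp: indicator_def)
qed

lemma ratio_orlicz_inv_le_phiU:
  assumes n: "1 \<le> n" and v: "1 \<le> v"
  shows "ereal (orlicz_inv M (v * real n) / orlicz_inv M v) \<le> phiU M n"
proof -
  define h where "h = 1 / (v * real n)"
  define K where "K = orlicz_inv M (v * real n)"
  have h: "0 < h" "real n * h = 1 / v" "1 / h = v * real n"
    using n v by (auto simp: h_def)
  have K: "0 < K" using n v orlicz_inv_pos by (simp add: K_def)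
  have "(\<lambda>t. \<Sum>i\<in>{1..n}. K * indicator {(real i - 1) * h..<real i * h} t)
      = (\<lambda>t. K * indicator {0..<1 / v} t)"
    using sum_indicator_consecutive_Ico[OF h(1)] h(2) by (simp add: sum_distrib_left[symmetric])
  moreover have "lux_norm M (\<lambda>t. K * indicator {0..<1 / v} t) = K / orlicz_inv M v"
    using lux_norm_step[OF K, of 0 "1 / v"] v by simp
  moreover have "ereal (lux_norm M (\<lambda>t. \<Sum>i\<in>{1..n}. K * indicator {(real i - 1) * h..<real i * h} t))
      \<le> phiU M n"
    using lux_norm_sum_le_phiU[OF disj_normone_steps[of h n]] h v unfolding K_def by simp
  ultimately show ?thesis unfolding K_def by simp
qed

lemma M_div_le:
  assumes n: "1 \<le> n" and P: "0 < P" and dil: "\<And>t. 1 \<le> t \<Longrightarrow> real n * M t \<le> M (P * t)"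
    and s: "0 \<le> s"
  shows "M (s / P) \<le> M s / real n + 1"
proof (cases "s \<le> P")
  case True
  then have "M (s / P) \<le> 1" using M_mono[of "s / P" 1] P s by simp
  then show ?thesis using M_nonneg[OF s] n by (smt (verit) divide_nonneg_nonneg of_nat_0_le_iff)
next
  case False
  then have "real n * M (s / P) \<le> M s" using dil[of "s / P"] P by simp
  then show ?thesis using n by (simp add: field_simps)
qed

lemma M_abs_disjoint_sum_le:
  assumes n: "1 \<le> n" and P: "0 < P" and dil: "\<And>t. 1 \<le> t \<Longrightarrow> real n * M t \<le> M (P * t)"
    and J: "finite J" and disj: "\<forall>i\<in>J. \<forall>j\<in>J. i \<noteq> j \<longrightarrow> x i = 0 \<or> x j = 0"
  shows "M \<bar>(\<Sum>i\<in>J. x i) / (4 * P)\<bar> \<le> (\<Sum>i\<in>J. M \<bar>x i / 2\<bar> / (2 * real n)) + 1 / 2"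
proof -
  let ?S = "\<Sum>i\<in>J. x i"
  have nonneg: "0 \<le> M \<bar>x i / 2\<bar> / (2 * real n)" for i
    by (simp add: M_nonneg)
  have half: "2 * M \<bar>?S / (4 * P)\<bar> \<le> M \<bar>?S / (2 * P)\<bar>"
    using mult_M_le_M_mult[of "\<bar>?S / (4 * P)\<bar>" 2] P by (simp add: abs_divide)
  from J disj show ?thesis
  proof (cases rule: sum_disjoint_support)
    case 1
    then show ?thesis using nonneg by (simp add: sum_nonneg)
  next
    case (2 j)
    have "M \<bar>?S / (2 * P)\<bar> = M (\<bar>x j / 2\<bar> / P)"
      using 2 P by (simp add: abs_divide)
    also have "\<dots> \<le> M \<bar>x j / 2\<bar> / real n + 1"
      by (rule M_div_le[OF n P dil]) simp_all
    finally have "M \<bar>?S / (4 * P)\<bar> \<le> M \<bar>x j / 2\<bar> / (2 * real n) + 1 / 2"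
      using half by (simp add: field_simps)
    moreover have "M \<bar>x j / 2\<bar> / (2 * real n) \<le> (\<Sum>i\<in>J. M \<bar>x i / 2\<bar> / (2 * real n))"
      using 2(1) J nonneg by (intro member_le_sum)
    ultimately show ?thesis by simp
  qed
qed

lemma orlicz_modular_disjoint_sum_le_one:
  assumes n: "1 \<le> n" and P: "0 < P" and dil: "\<And>t. 1 \<le> t \<Longrightarrow> real n * M t \<le> M (P * t)"
    and J: "finite J" "card J \<le> n"
    and x: "\<And>i. i \<in> J \<Longrightarrow> in_LM M (x i) \<and> lux_norm M (x i) = 1"
    and disj: "\<And>i j. i \<in> J \<Longrightarrow> j \<in> J \<Longrightarrow> i \<noteq> j \<Longrightarrow>
                 AE t in lebesgue_on {0..1}. x i t = 0 \<or> x j t = 0"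
  shows "orlicz_modular M (\<lambda>t. (\<Sum>i\<in>J. x i t) / (4 * P)) \<le> 1"
proof -
  let ?L = "lebesgue_on {0..1::real}"
  let ?m = "\<lambda>i t. ennreal (M \<bar>x i t / 2\<bar> / (2 * real n))"
  have "AE t in ?L. \<forall>(i, j)\<in>J \<times> J. i \<noteq> j \<longrightarrow> x i t = 0 \<or> x j t = 0"
    using J(1) by (intro AE_finite_allI) (auto intro: disj)
  then have pointwise: "AE t in ?L. ennreal (M \<bar>(\<Sum>i\<in>J. x i t) / (4 * P)\<bar>) \<le> (\<Sum>i\<in>J. ?m i t) + ennreal (1 / 2)"
  proof (rule AE_mp, intro AE_I2 impI)
    fix t assume "\<forall>(i, j)\<in>J \<times> J. i \<noteq> j \<longrightarrow> x i t = 0 \<or> x j t = 0"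
    then have "M \<bar>(\<Sum>i\<in>J. x i t) / (4 * P)\<bar> \<le> (\<Sum>i\<in>J. M \<bar>x i t / 2\<bar> / (2 * real n)) + 1 / 2"
      using M_abs_disjoint_sum_le[OF n P dil J(1), of "\<lambda>i. x i t"] by auto
    then have "ennreal (M \<bar>(\<Sum>i\<in>J. x i t) / (4 * P)\<bar>)
        \<le> ennreal ((\<Sum>i\<in>J. M \<bar>x i t / 2\<bar> / (2 * real n)) + 1 / 2)"
      by (rule ennreal_leI)
    also have "\<dots> = (\<Sum>i\<in>J. ?m i t) + ennreal (1 / 2)"
      by (simp add: M_nonneg ennreal_plus sum_nonneg sum_ennreal)
    finally show "ennreal (M \<bar>(\<Sum>i\<in>J. x i t) / (4 * P)\<bar>) \<le> (\<Sum>i\<in>J. ?m i t) + ennreal (1 / 2)" .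
  qed
  have measurable: "?m i \<in> borel_measurable ?L" if "i \<in> J" for i
  proof -
    have "(\<lambda>t. x i t / 2) \<in> borel_measurable ?L" using x[OF that] unfolding in_LM_def by auto
    from M_abs_measurable[OF this] show ?thesis by simp
  qed
  have summand: "(\<integral>\<^sup>+ t. ?m i t \<partial>?L) \<le> ennreal (1 / (2 * real n))" if "i \<in> J" for i
  proof -
    have "(\<integral>\<^sup>+ t. ?m i t \<partial>?L) = orlicz_modular M (\<lambda>t. x i t / 2) * ennreal (1 / (2 * real n))"
      unfolding orlicz_modular_def using measurable[OF that] x[OF that] M_abs_measurable[of "\<lambda>t. x i t / 2"]
      by (subst nn_integral_multc[symmetric]) (auto simp: in_LM_def M_nonneg ennreal_mult'[symmetric])
    also have "\<dots> \<le> 1 * ennreal (1 / (2 * real n))"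
      using x[OF that] by (intro mult_right_mono orlicz_modular_half_le_one) auto
    finally show ?thesis by simp
  qed
  have "orlicz_modular M (\<lambda>t. (\<Sum>i\<in>J. x i t) / (4 * P)) \<le> (\<integral>\<^sup>+ t. (\<Sum>i\<in>J. ?m i t) + ennreal (1 / 2) \<partial>?L)"
    unfolding orlicz_modular_def by (rule nn_integral_mono_AE[OF pointwise])
  also have "\<dots> = (\<Sum>i\<in>J. \<integral>\<^sup>+ t. ?m i t \<partial>?L) + ennreal (1 / 2)"
    using measurable emeasure_space_lebesgue_on_unit by (subst nn_integral_add) (auto simp: nn_integral_sum)
  also have "\<dots> \<le> (\<Sum>i\<in>J. ennreal (1 / (2 * real n))) + ennreal (1 / 2)"
    by (intro add_right_mono sum_mono summand)
  also have "\<dots> \<le> ennreal (1 / 2) + ennreal (1 / 2)"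
  proof (intro add_right_mono)
    have "(\<Sum>i\<in>J. ennreal (1 / (2 * real n))) = ennreal (real (card J) / (2 * real n))"
      by (subst sum_ennreal) simp_all
    also have "\<dots> \<le> ennreal (1 / 2)"
      using J n by (intro ennreal_leI) (simp add: field_simps)
    finally show "(\<Sum>i\<in>J. ennreal (1 / (2 * real n))) \<le> ennreal (1 / 2)" .
  qed
  also have "\<dots> = 1"
    by (subst ennreal_plus[symmetric]) auto
  finally show ?thesis .
qed

lemma phiU_le:
  assumes n: "1 \<le> n" and P: "0 < P" and dil: "\<And>t. 1 \<le> t \<Longrightarrow> real n * M t \<le> M (P * t)"
  shows "phiU M n \<le> ereal (4 * P)"
  unfolding phiU_def XU_def XU_n_def
proof (intro SUP_least Sup_least, clarify)
  fix m x assume x: "disj_normone M m x"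
  define J where "J = {i \<in> {1..m}. i \<le> n}"
  have "J \<subseteq> {1..n}" by (auto simp: J_def)
  then have J: "finite J" "card J \<le> n"
    using card_mono[of "{1..n}" J] finite_subset by auto
  have "(\<lambda>t. \<Sum>i\<in>{1..m}. (if 1 \<le> i \<and> i \<le> n then 1 else 0) * x i t) = (\<lambda>t. \<Sum>i\<in>J. x i t)"
    unfolding J_def by (intro ext, subst sum.inter_filter) (auto intro: sum.cong)
  moreover have "orlicz_modular M (\<lambda>t. (\<Sum>i\<in>J. x i t) / (4 * P)) \<le> 1"
    using x by (intro orlicz_modular_disjoint_sum_le_one[OF n P dil J]) (auto simp: disj_normone_def J_def)
  ultimately show "ereal (lux_norm M (\<lambda>t. \<Sum>i\<in>{1..m}. (if 1 \<le> i \<and> i \<le> n then 1 else 0) * x i t))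
      \<le> ereal (4 * P)"
    using P lux_norm_le[of "4 * P" M "\<lambda>t. \<Sum>i\<in>J. x i t"] by simp
qed

end

theorem mainTheorem19:
  fixes M :: "real \<Rightarrow> real"
  assumes "orlicz_function M" and "delta2_infty M"
  shows "\<exists>c>0. \<forall>n::nat. n \<ge> 1 \<longrightarrow>
           ereal (1 / c) * Phi_fun (orlicz_inv M) (real n) \<le> phiU M n \<and>
           phiU M n \<le> ereal c * Phi_fun (orlicz_inv M) (real n)"
proof (intro exI[of _ 4] conjI allI impI)
  interpret orlicz M by (rule orlicz.intro) fact
  fix n :: nat assume n: "1 \<le> n"
  then obtain P where P: "Phi_fun (orlicz_inv M) (real n) = ereal P" "1 \<le> P"
    using Phi_fun_inv_nat by metis
  have "phiU M n \<le> ereal (4 * P)"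
    using P dilation_Phi_fun_inv[OF n P(1)] n by (intro phiU_le) auto
  then show "phiU M n \<le> ereal 4 * Phi_fun (orlicz_inv M) (real n)"
    using P(1) by simp
  have "Phi_fun (orlicz_inv M) (real n) \<le> phiU M n"
    unfolding Phi_fun_nat[OF n] using ratio_orlicz_inv_le_phiU[OF n] by (auto intro: SUP_least)
  moreover have "ereal (1 / 4) * Phi_fun (orlicz_inv M) (real n) \<le> Phi_fun (orlicz_inv M) (real n)"
    using P by simp
  ultimately show "ereal (1 / 4) * Phi_fun (orlicz_inv M) (real n) \<le> phiU M n"
    by (rule order_trans[rotated])
qed simp

end
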